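(* Let $E_1,\dots,E_{N_B}$ be pairwise distinct real numbers satisfying the non-degeneracy condition at order $p$, let $d_1,\dots,d_{N_B}>0$, and let $\chi(t)=\sum_{j=1}^{N_B}d_je^{-itE_j}$ and $I_k=\overline{|\chi(t)|^{2k}}$. Then for every $k=1,\dots,p$, $$I_k=(k!)^2\sum_{\substack{k_1,\dots,k_{N_B}\ge0\\ k_1+\dots+k_{N_B}=k}}\ \prod_{i=1}^{N_B}\left(\frac{d_i^{k_i}}{k_i!}\right)^2 .$$ Moreover, defining coefficients $a_n$ by the power series $\ln\big(I_0(2\sqrt z)\big)=\sum_{n=1}^\infty a_n\frac{z^n}{n!}$ (where $I_0$ is the modified Bessel function of the first kind) and $X_n:=\sum_{j=1}^{N_B}d_j^{2n}$, one has $$I_p=\sum_{q=1}^{p-1}\binom{p-1}{q-1}\frac{p!}{(p-q)!}\,a_qX_qI_{p-q}+p!\,a_pX_p .$$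
   Context: $\overline{f(t)}:=\lim_{T\to\infty}\frac1T\int_0^Tf(t)\,dt$. Pairwise distinct numbers $E_1,\dots,E_{N_B}$ satisfy the non-degeneracy condition at order $M$ ($M$-ND) if for any sequences $\alpha_i,\beta_i\in\{1,\dots,N_B\}$, $i=1,\dots,M$, the equality $\sum_{j=1}^ME_{\alpha_j}=\sum_{j=1}^ME_{\beta_j}$ implies $\alpha_i=\beta_{\pi(i)}$ for some permutation $\pi\in\mathbb S_M$. $M$-ND implies $N$-ND for $1\le N\le M$. *)

theory Defs
  imports "HOL-Analysis.Analysis" "HOL-Combinatorics.Permutations"
begin

definition time_avg :: "(real \<Rightarrow> real) \<Rightarrow> real" where
  "time_avg f = Lim at_top (\<lambda>T. (1 / T) * integral {0..T} f)"

definition nondeg :: "nat \<Rightarrow> (nat \<Rightarrow> real) \<Rightarrow> nat \<Rightarrow> bool" where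
  "nondeg N E M \<longleftrightarrow>
     (\<forall>\<alpha> \<beta>. (\<forall>i<M. \<alpha> i < N \<and> \<beta> i < N) \<longrightarrow>
        (\<Sum>j<M. E (\<alpha> j)) = (\<Sum>j<M. E (\<beta> j)) \<longrightarrow>
        (\<exists>\<pi>. \<pi> permutes {..<M} \<and> (\<forall>i<M. \<alpha> i = \<beta> (\<pi> i))))"

definition bessel_I0 :: "real \<Rightarrow> real" where
  "bessel_I0 x = (\<Sum>m. (x / 2) ^ (2 * m) / (fact m)^2)"

definition chi :: "nat \<Rightarrow> (nat \<Rightarrow> real) \<Rightarrow> (nat \<Rightarrow> real) \<Rightarrow> real \<Rightarrow> complex" where
  "chi N d E t = (\<Sum>j<N. complex_of_real (d j) * exp (- \<i> * complex_of_real (t * E j)))"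

end

theory Submission
  imports Defs "HOL-Combinatorics.Multiset_Permutations"
begin

text \<open>
  Write \<open>|\<chi>(t)|\<^bsup>2k\<^esup>\<close> as \<open>\<chi>(t)\<^sup>k\<close> times its conjugate and expand both factors over index
  lists \<open>a, b\<close> of length \<open>k\<close>: the result is a trigonometric polynomial whose terms oscillate with
  frequency \<open>E\<^sub>b - E\<^sub>a\<close>, where \<open>E\<^sub>a\<close> is the sum of the energies along \<open>a\<close>. The time average keeps
  exactly the resonant pairs, and non-degeneracy at order \<open>p \<ge> k\<close> makes these the pairs of lists
  that are permutations of each other. Counting the permutations of each multiset gives
  \<open>I\<^sub>k = (k!)\<^sup>2 S\<^sub>k\<close>, with \<open>S\<^sub>k\<close> the sum in the statement (\<open>moment_sum\<close> below).

  The \<open>S\<^sub>k\<close> are the coefficients of \<open>F(z) = \<Prod>\<^sub>j G(d\<^sub>j\<^sup>2 z)\<close>, where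
  \<open>G(z) = \<Sum>\<^sub>m z\<^sup>m/(m!)\<^sup>2 = I\<^sub>0(2\<surd>z)\<close>. Since \<open>ln G = C\<close> with \<open>C(z) = \<Sum>\<^sub>n a\<^sub>n z\<^sup>n/n!\<close> near 0,
  the identity theorem for power series yields the formal identity \<open>G' = G C'\<close>, hence
  \<open>F' = F D'\<close> with \<open>D(z) = \<Sum>\<^sub>j C(d\<^sub>j\<^sup>2 z) = \<Sum>\<^sub>n a\<^sub>n X\<^sub>n z\<^sup>n/n!\<close>. Comparing coefficients of
  \<open>z\<^bsup>p-1\<^esup>\<close> gives the recurrence.
\<close>

section \<open>Expansion of the powers of the signal\<close>

definition index_lists :: "nat \<Rightarrow> nat \<Rightarrow> nat list set" where
  "index_lists N k = {xs. set xs \<subseteq> {..<N} \<and> length xs = k}"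

lemma finite_index_lists [simp]: "finite (index_lists N k)"
  unfolding index_lists_def by (rule finite_lists_length_eq) simp

lemma power_sum_eq_sum_index_lists:
  fixes f :: "nat \<Rightarrow> 'a::comm_semiring_1"
  shows "(\<Sum>j<N. f j) ^ k = (\<Sum>xs\<in>index_lists N k. \<Prod>j\<leftarrow>xs. f j)"
proof (induction k)
  case 0
  have "index_lists N 0 = {[]}" by (auto simp: index_lists_def)
  then show ?case by simp
next
  case (Suc k)
  have "(\<Sum>j<N. f j) ^ Suc k = (\<Sum>xs\<in>index_lists N k. \<Prod>j\<leftarrow>xs. f j) * (\<Sum>j<N. f j)"
    using Suc by (simp add: mult.commute)
  also have "\<dots> = (\<Sum>(xs, j)\<in>index_lists N k \<times> {..<N}. \<Prod>i\<leftarrow>j # xs. f i)"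
    unfolding sum_product sum.cartesian_product by (simp add: mult.commute)
  also have "\<dots> = (\<Sum>xs\<in>index_lists N (Suc k). \<Prod>j\<leftarrow>xs. f j)"
    unfolding index_lists_def lists_length_Suc_eq
    by (subst sum.reindex) (auto simp: inj_on_def case_prod_unfold)
  finally show ?case .
qed

lemma chi_power:
  "chi N d E t ^ k = (\<Sum>xs\<in>index_lists N k.
     complex_of_real (\<Prod>j\<leftarrow>xs. d j) * cis (- (t * (\<Sum>j\<leftarrow>xs. E j))))"
proof -
  have "(\<Prod>j\<leftarrow>xs. complex_of_real (d j) * cis (- (t * E j))) =
        complex_of_real (\<Prod>j\<leftarrow>xs. d j) * cis (- (t * (\<Sum>j\<leftarrow>xs. E j)))" for xs
    by (induction xs) (auto simp: cis_mult algebra_simps)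
  then show ?thesis
    unfolding chi_def by (simp add: cis_conv_exp power_sum_eq_sum_index_lists)
qed

lemma cmod_chi_power_eq_cos_sum:
  "cmod (chi N d E t) ^ (2 * k) =
     (\<Sum>a\<in>index_lists N k. \<Sum>b\<in>index_lists N k. (\<Prod>j\<leftarrow>a. d j) * (\<Prod>j\<leftarrow>b. d j) *
        cos (t * ((\<Sum>j\<leftarrow>b. E j) - (\<Sum>j\<leftarrow>a. E j))))" (is "_ = ?rhs")
proof -
  have "cmod (chi N d E t) ^ (2 * k) = cmod (chi N d E t ^ k) ^ 2"
    by (simp add: norm_power power_mult mult.commute[of 2])
  also have "\<dots> = Re (chi N d E t ^ k * cnj (chi N d E t ^ k))"
    by (simp only: complex_mult_cnj cmod_power2 Re_complex_of_real)
  also have "\<dots> = ?rhs"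
    unfolding chi_power cnj_sum sum_product Re_sum
    by (intro sum.cong refl) (simp add: cis_cnj cis_mult algebra_simps flip: of_real_mult)
  finally show ?thesis .
qed

section \<open>Time averages of trigonometric polynomials\<close>

lemma integral_cos_mult_right:
  fixes w T :: real
  assumes "w \<noteq> 0" "0 \<le> T"
  shows "integral {0..T} (\<lambda>t. cos (t * w)) = sin (T * w) / w"
proof -
  have "((\<lambda>t. sin (t * w) / w) has_real_derivative cos (t * w)) (at t within {0..T})" for t
    using assms by (auto intro!: derivative_eq_intros)
  then have "((\<lambda>t. cos (t * w)) has_integral sin (T * w) / w - sin (0 * w) / w) {0..T}"
    using assms by (intro fundamental_theorem_of_calculus)
      (auto simp: has_real_derivative_iff_has_vector_derivative)
  then show ?thesis by (simp add: integral_unique)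
qed

lemma time_average_cos_tendsto:
  fixes w :: real
  shows "((\<lambda>T. 1 / T * integral {0..T} (\<lambda>t. cos (t * w))) \<longlongrightarrow> (if w = 0 then 1 else 0)) at_top"
proof (cases "w = 0")
  case True
  have "eventually (\<lambda>T. 1 = 1 / T * integral {0..T} (\<lambda>t. cos (t * w))) at_top"
    using eventually_gt_at_top[of "0::real"] by eventually_elim (simp add: True)
  then show ?thesis using True by (intro Lim_transform_eventually[OF tendsto_const]) auto
next
  case False
  have eq: "eventually (\<lambda>T. sin (T * w) / w / T = 1 / T * integral {0..T} (\<lambda>t. cos (t * w))) at_top"
    using eventually_gt_at_top[of "0::real"]
    by eventually_elim (simp add: integral_cos_mult_right False)
  have bound: "eventually (\<lambda>T. norm (sin (T * w) / w / T) \<le> 1 / \<bar>w\<bar> * inverse T) at_top"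
    using eventually_gt_at_top[of "0::real"]
  proof eventually_elim
    case (elim T)
    have "norm (sin (T * w) / w / T) = \<bar>sin (T * w)\<bar> / \<bar>w\<bar> / T"
      using elim by (simp add: abs_divide abs_mult)
    also have "\<dots> \<le> 1 / \<bar>w\<bar> / T"
      using elim by (intro divide_right_mono) (auto simp: abs_sin_le_one)
    finally show ?case by (simp add: divide_inverse)
  qed
  have "((\<lambda>T. 1 / \<bar>w\<bar> * inverse T) \<longlongrightarrow> 0) at_top"
    by (intro tendsto_mult_right_zero tendsto_inverse_0_at_top filterlim_ident)
  then have "((\<lambda>T. sin (T * w) / w / T) \<longlongrightarrow> 0) at_top"
    using bound by (rule Lim_null_comparison[rotated])
  then show ?thesis using False Lim_transform_eventually[OF _ eq] by simp
qed

lemma time_average_cos_sum_tendsto: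
  fixes c w :: "'i \<Rightarrow> real"
  assumes "finite A"
  shows "((\<lambda>T. 1 / T * integral {0..T} (\<lambda>t. \<Sum>i\<in>A. c i * cos (t * w i)))
          \<longlongrightarrow> (\<Sum>i\<in>A. if w i = 0 then c i else 0)) at_top"
proof -
  have "integral {0..T} (\<lambda>t. \<Sum>i\<in>A. c i * cos (t * w i)) =
        (\<Sum>i\<in>A. c i * integral {0..T} (\<lambda>t. cos (t * w i)))" for T
    using assms by (simp add: integral_sum integrable_continuous_real continuous_intros)
  moreover have "((\<lambda>T. \<Sum>i\<in>A. c i * (1 / T * integral {0..T} (\<lambda>t. cos (t * w i))))
          \<longlongrightarrow> (\<Sum>i\<in>A. c i * (if w i = 0 then 1 else 0))) at_top"
    by (intro tendsto_sum tendsto_mult tendsto_const time_average_cos_tendsto)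
  ultimately show ?thesis
    by (simp add: sum_distrib_left algebra_simps if_distrib cong: if_cong)
qed

lemma nondeg_sum_list_eq_imp_mset_eq:
  assumes ND: "nondeg N E p" and "k \<le> p"
    and ab: "a \<in> index_lists N k" "b \<in> index_lists N k"
    and eq: "(\<Sum>j\<leftarrow>a. E j) = (\<Sum>j\<leftarrow>b. E j)"
  shows "mset a = mset b"
proof (cases "N = 0")
  case True
  then show ?thesis using ab by (auto simp: index_lists_def)
next
  case False
  \<comment> \<open>Padding both lists with the index 0 brings them to the length p where non-degeneracy applies.\<close>
  define a' where "a' = a @ replicate (p - k) 0"
  define b' where "b' = b @ replicate (p - k) 0"
  have len: "length a' = p" "length b' = p"
    using ab \<open>k \<le> p\<close> by (auto simp: a'_def b'_def index_lists_def)
  have "set a' \<subseteq> {..<N}" "set b' \<subseteq> {..<N}"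
    using ab False by (auto simp: a'_def b'_def index_lists_def)
  then have "\<forall>i<p. a' ! i < N \<and> b' ! i < N"
    using len by (metis lessThan_iff nth_mem subsetD)
  moreover have "(\<Sum>j<p. E (a' ! j)) = (\<Sum>j<p. E (b' ! j))"
  proof -
    have "(\<Sum>j\<leftarrow>xs. E j) = (\<Sum>j<length xs. E (xs ! j))" for xs
      by (simp add: sum_list_sum_nth atLeast0LessThan)
    then show ?thesis using eq len by (metis a'_def b'_def map_append sum_list_append)
  qed
  ultimately obtain \<pi> where \<pi>: "\<pi> permutes {..<p}" "\<forall>i<p. a' ! i = b' ! (\<pi> i)"
    using ND unfolding nondeg_def by blast
  have "a' = permute_list \<pi> b'"
    by (rule nth_equalityI) (use len \<pi> in \<open>auto simp: permute_list_nth\<close>)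
  then have "mset a' = mset b'" using \<pi> len by simp
  then show ?thesis by (simp add: a'_def b'_def)
qed

section \<open>Counting resonant pairs of index lists\<close>

lemma mset_in_multisets_of_size:
  "a \<in> index_lists N k \<Longrightarrow> mset a \<in> multisets_of_size {..<N} k"
  unfolding index_lists_def multisets_of_size_def by auto

lemma index_lists_with_mset:
  assumes "\<mu> \<in> multisets_of_size {..<N} k"
  shows "{a \<in> index_lists N k. mset a = \<mu>} = permutations_of_multiset \<mu>"
  using assms unfolding index_lists_def multisets_of_size_def permutations_of_multiset_def
  by (auto simp flip: set_mset_mset size_mset)

lemma sum_index_lists_by_mset:
  fixes g :: "nat multiset \<Rightarrow> 'a::comm_semiring_1"
  shows "(\<Sum>a\<in>index_lists N k. g (mset a)) =
         (\<Sum>\<mu>\<in>multisets_of_size {..<N} k. of_nat (card (permutations_of_multiset \<mu>)) * g \<mu>)"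
proof -
  have "(\<Sum>a\<in>index_lists N k. g (mset a)) =
        (\<Sum>\<mu>\<in>multisets_of_size {..<N} k. \<Sum>a\<in>{a \<in> index_lists N k. mset a = \<mu>}. g (mset a))"
    by (rule sum.group[symmetric]) (auto simp: mset_in_multisets_of_size)
  also have "\<dots> = (\<Sum>\<mu>\<in>multisets_of_size {..<N} k. \<Sum>a\<in>permutations_of_multiset \<mu>. g \<mu>)"
    by (intro sum.cong refl) (auto simp: index_lists_with_mset permutations_of_multiset_def)
  finally show ?thesis by simp
qed

lemma size_eq_sum_count:
  fixes M :: "'a multiset"
  assumes "set_mset M \<subseteq> A" "finite A"
  shows "size M = (\<Sum>x\<in>A. count M x)"
  unfolding size_multiset_overloaded_eq
  by (rule sum.mono_neutral_left) (use assms in \<open>auto simp: not_in_iff\<close>)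

lemma prod_mset_image_eq_prod_count:
  fixes M :: "'a multiset" and f :: "'a \<Rightarrow> 'b::comm_monoid_mult"
  assumes "set_mset M \<subseteq> A" "finite A"
  shows "prod_mset (image_mset f M) = (\<Prod>x\<in>A. f x ^ count M x)"
  using assms(1)
proof (induction M)
  case empty
  then show ?case by simp
next
  case (add y M)
  then have "(\<Prod>x\<in>A. f x ^ count (add_mset y M) x) = (\<Prod>x\<in>A. f x ^ count M x * (if x = y then f x else 1))"
    by (intro prod.cong) (auto simp del: power_Suc simp add: power_Suc2)
  also have "\<dots> = (\<Prod>x\<in>A. f x ^ count M x) * f y"
    using add assms(2) by (simp add: prod.distrib)
  finally show ?case using add by (simp add: mult.commute)
qed

lemma real_card_permutations_of_multiset:
  fixes M :: "'a multiset"
  assumes "set_mset M \<subseteq> A" "finite A"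
  shows "real (card (permutations_of_multiset M)) = fact (size M) / (\<Prod>x\<in>A. fact (count M x))"
proof -
  have "(\<Prod>x\<in>set_mset M. fact (count M x)) = (\<Prod>x\<in>A. fact (count M x) :: nat)"
    by (rule prod.mono_neutral_left) (use assms in \<open>auto simp: not_in_iff\<close>)
  then have "real (card (permutations_of_multiset M) * (\<Prod>x\<in>A. fact (count M x))) = fact (size M)"
    using card_permutations_of_multiset_aux[of M] by (metis of_nat_fact)
  moreover have "(\<Prod>x\<in>A. fact (count M x) :: real) > 0" by (rule prod_pos) simp
  ultimately show ?thesis by (simp add: eq_divide_eq)
qed

definition moment_sum :: "nat \<Rightarrow> (nat \<Rightarrow> real) \<Rightarrow> nat \<Rightarrow> real" where
  "moment_sum N d k =
     (\<Sum>\<mu>\<in>multisets_of_size {..<N} k. \<Prod>i<N. (d i ^ count \<mu> i / fact (count \<mu> i))^2)"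

lemma moment_sum_0 [simp]: "moment_sum N d 0 = 1"
  by (simp add: moment_sum_def)

lemma sum_pairs_same_mset:
  "(\<Sum>a\<in>index_lists N k. \<Sum>b\<in>index_lists N k.
      if mset a = mset b then (\<Prod>j\<leftarrow>a. d j) * (\<Prod>j\<leftarrow>b. d j) else 0)
   = (fact k)^2 * moment_sum N d k"
proof -
  define M where "M = multisets_of_size {..<N} k"
  define c where "c \<mu> = real (card (permutations_of_multiset \<mu>))" for \<mu> :: "nat multiset"
  define w where "w \<mu> = prod_mset (image_mset d \<mu>)" for \<mu> :: "nat multiset"
  have w: "(\<Prod>j\<leftarrow>a. d j) = w (mset a)" for a
    by (simp add: w_def prod_mset_prod_list flip: mset_map)
  have "(\<Sum>b\<in>index_lists N k. if mset a = mset b then w (mset a) * w (mset b) else 0)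
        = c (mset a) * w (mset a)^2" if "a \<in> index_lists N k" for a
  proof -
    have "(\<Sum>b\<in>index_lists N k. if mset a = mset b then w (mset a) * w (mset b) else 0)
          = (\<Sum>\<mu>\<in>M. c \<mu> * (if mset a = \<mu> then w (mset a) * w \<mu> else 0))"
      unfolding c_def M_def by (rule sum_index_lists_by_mset)
    then show ?thesis
      using mset_in_multisets_of_size[OF that]
      by (simp add: M_def power2_eq_square if_distrib sum.delta' finite_multisets_of_size cong: if_cong)
  qed
  then have "(\<Sum>a\<in>index_lists N k. \<Sum>b\<in>index_lists N k.
      if mset a = mset b then (\<Prod>j\<leftarrow>a. d j) * (\<Prod>j\<leftarrow>b. d j) else 0)
      = (\<Sum>a\<in>index_lists N k. c (mset a) * w (mset a)^2)"
    unfolding w by (intro sum.cong) simp_all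
  also have "\<dots> = (\<Sum>\<mu>\<in>M. c \<mu> * (c \<mu> * w \<mu>^2))"
    unfolding M_def c_def by (rule sum_index_lists_by_mset)
  also have "\<dots> = (\<Sum>\<mu>\<in>M. (fact k)^2 * (\<Prod>i<N. (d i ^ count \<mu> i / fact (count \<mu> i))^2))"
  proof (intro sum.cong refl)
    fix \<mu> assume "\<mu> \<in> M"
    then have \<mu>: "set_mset \<mu> \<subseteq> {..<N}" "size \<mu> = k" by (auto simp: M_def multisets_of_size_def)
    have "c \<mu> * (c \<mu> * w \<mu>^2) = (c \<mu> * w \<mu>)^2" by (simp add: power2_eq_square)
    also have "c \<mu> * w \<mu> = fact k * (\<Prod>i<N. d i ^ count \<mu> i / fact (count \<mu> i))"
      using \<mu> by (simp add: c_def w_def real_card_permutations_of_multiset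
          prod_mset_image_eq_prod_count prod_dividef)
    finally show "c \<mu> * (c \<mu> * w \<mu>^2) = (fact k)^2 * (\<Prod>i<N. (d i ^ count \<mu> i / fact (count \<mu> i))^2)"
      by (simp add: power_mult_distrib prod_power_distrib)
  qed
  finally show ?thesis by (simp add: moment_sum_def M_def sum_distrib_left)
qed

lemma bij_betw_count_multisets_of_size:
  fixes N k :: nat
  shows "bij_betw count (multisets_of_size {..<N} k) {ks. (\<forall>i\<ge>N. ks i = 0) \<and> (\<Sum>i<N. ks i) = k}"
proof (rule bij_betwI')
  fix x y :: "nat multiset"
  show "(count x = count y) = (x = y)"
    by (metis multiset_eqI)
next
  fix x :: "nat multiset" assume "x \<in> multisets_of_size {..<N} k"
  then have x: "set_mset x \<subseteq> {..<N}" "size x = k" by (auto simp: multisets_of_size_def)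
  then have "count x i = 0" if "N \<le> i" for i
    using that by (auto simp: count_eq_zero_iff)
  then show "count x \<in> {ks. (\<forall>i\<ge>N. ks i = 0) \<and> (\<Sum>i<N. ks i) = k}"
    using x size_eq_sum_count[OF x(1)] by simp
next
  fix ks assume ks: "ks \<in> {ks. (\<forall>i\<ge>N. ks i = 0) \<and> (\<Sum>i<N. ks i) = k}"
  then have "{i. 0 < ks i} \<subseteq> {..<N}"
    by (auto simp: not_less[symmetric])
  then have count: "count (Abs_multiset ks) = ks"
    by (simp add: finite_subset)
  have "set_mset (Abs_multiset ks) \<subseteq> {..<N}"
  proof
    fix i assume "i \<in># Abs_multiset ks"
    then have "ks i \<noteq> 0" by (metis count count_eq_zero_iff)
    then show "i \<in> {..<N}" using ks by (cases "i < N") auto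
  qed
  then have "Abs_multiset ks \<in> multisets_of_size {..<N} k"
    using ks size_eq_sum_count[of _ "{..<N}"] by (simp add: multisets_of_size_def count)
  then show "\<exists>x\<in>multisets_of_size {..<N} k. ks = count x"
    using count by metis
qed

lemma moment_sum_eq_sum_count_vectors:
  "moment_sum N d k = (\<Sum>ks\<in>{ks. (\<forall>i\<ge>N. ks i = 0) \<and> (\<Sum>i<N. ks i) = k}.
                          \<Prod>i<N. (d i ^ ks i / fact (ks i))^2)"
  unfolding moment_sum_def by (rule sum.reindex_bij_betw[OF bij_betw_count_multisets_of_size])

lemma time_average_cmod_chi_power_tendsto:
  assumes "nondeg N E p" "k \<le> p"
  shows "((\<lambda>T. 1 / T * integral {0..T} (\<lambda>t. cmod (chi N d E t) ^ (2 * k)))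
           \<longlongrightarrow> (fact k)^2 * moment_sum N d k) at_top"
proof -
  define c where "c = (\<lambda>(a, b). (\<Prod>j\<leftarrow>a. d j) * (\<Prod>j\<leftarrow>b. d j))"
  define w where "w = (\<lambda>(a, b). (\<Sum>j\<leftarrow>b. E j) - (\<Sum>j\<leftarrow>a. E j))"
  define L where "L = index_lists N k \<times> index_lists N k"
  have "(\<lambda>t. cmod (chi N d E t) ^ (2 * k)) = (\<lambda>t. \<Sum>i\<in>L. c i * cos (t * w i))"
    unfolding cmod_chi_power_eq_cos_sum L_def sum.cartesian_product c_def w_def
    by (simp add: case_prod_unfold)
  moreover have "(\<Sum>i\<in>L. if w i = 0 then c i else 0) = (fact k)^2 * moment_sum N d k"
  proof -
    have "w (a, b) = 0 \<longleftrightarrow> mset a = mset b" if "a \<in> index_lists N k" "b \<in> index_lists N k" for a b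
      using nondeg_sum_list_eq_imp_mset_eq[OF assms that] 
      by (auto simp: w_def) (metis mset_map sum_mset_sum_list)
    then show ?thesis
      unfolding sum_pairs_same_mset[symmetric] L_def sum.cartesian_product
      by (intro sum.cong refl) (auto simp: c_def)
  qed
  ultimately show ?thesis
    using time_average_cos_sum_tendsto[of L c w] by (simp add: L_def)
qed

section \<open>Logarithmic derivatives of power series\<close>

lemma fps_eq_0_if_eval_fps_eventually_0:
  fixes f :: "real fps"
  assumes radius: "fps_conv_radius f > 0"
    and zero: "eventually (\<lambda>z. eval_fps f z = 0) (at_right 0)"
  shows "f = 0"
proof (rule ccontr)
  assume "f \<noteq> 0"
  define g where "g = fps_shift (subdegree f) f"
  have "eval_fps g 0 \<noteq> 0"
    using \<open>f \<noteq> 0\<close> by (simp add: g_def eval_fps_at_0)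
  moreover have "(eval_fps g \<longlongrightarrow> eval_fps g 0) (at_right 0)"
    using continuous_eval_fps[of 0 g "{0<..}"] radius by (simp add: continuous_within g_def zero_ereal_def)
  moreover have "eventually (\<lambda>z. eval_fps g z = 0) (at_right 0)"
  proof -
    have "eventually (\<lambda>z. z \<in> eball 0 (fps_conv_radius f)) (nhds (0::real))"
      using radius by (intro eventually_nhds_in_open) (auto simp: zero_ereal_def)
    then have "eventually (\<lambda>z. norm z < fps_conv_radius f) (at_right (0::real))"
      by (auto simp: eventually_at_filter elim: eventually_mono)
    with zero eventually_at_right_less[of 0] show ?thesis
      by eventually_elim (simp add: g_def eval_fps_shift)
  qed
  ultimately show False
    using tendsto_unique[OF trivial_limit_at_right_real] tendsto_eventually by metis
qed

lemma fps_deriv_compose_eq_mult_deriv: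
  fixes G C b :: "'a::idom fps"
  assumes "fps_deriv G = G * fps_deriv C" "fps_nth b 0 = 0"
  shows "fps_deriv (G oo b) = (G oo b) * fps_deriv (C oo b)"
  using assms by (simp add: fps_compose_deriv fps_compose_mult_distrib mult.assoc)

lemma fps_deriv_prod_eq_mult_deriv_sum:
  fixes G C :: "'i \<Rightarrow> 'a::comm_ring_1 fps"
  assumes "finite I" "\<And>i. i \<in> I \<Longrightarrow> fps_deriv (G i) = G i * fps_deriv (C i)"
  shows "fps_deriv (\<Prod>i\<in>I. G i) = (\<Prod>i\<in>I. G i) * fps_deriv (\<Sum>i\<in>I. C i)"
  using assms by (induction I rule: finite_induct) (simp_all add: algebra_simps)

lemma fps_deriv_eq_mult_deriv_if_exp_eval_fps_eq:
  fixes G C :: "real fps"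
  assumes r: "r > 0" and radius: "ereal r \<le> fps_conv_radius G" "ereal r \<le> fps_conv_radius C"
    and exp_C: "\<And>z. 0 < z \<Longrightarrow> z < r \<Longrightarrow> exp (eval_fps C z) = eval_fps G z"
  shows "fps_deriv G = G * fps_deriv C"
proof -
  have in_radius: "norm z < F" if "ereal r \<le> F" "z \<in> {0<..<r}" for z :: real and F :: ereal
    using that by (auto intro: order_less_le_trans[of _ "ereal r"])
  have radius': "ereal r \<le> fps_conv_radius (fps_deriv G)" "ereal r \<le> fps_conv_radius (fps_deriv C)"
    using radius fps_conv_radius_deriv order_trans by blast+
  then have "ereal r \<le> fps_conv_radius (G * fps_deriv C)"
    using radius fps_conv_radius_mult[of G "fps_deriv C"] by (auto simp: min_def split: if_splits)
  then have radius_diff: "ereal r \<le> fps_conv_radius (fps_deriv G - G * fps_deriv C)"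
    using radius' fps_conv_radius_diff[of "fps_deriv G" "G * fps_deriv C"] by (auto simp: min_def split: if_splits)
  have "eval_fps (fps_deriv G - G * fps_deriv C) z = 0" if z: "z \<in> {0<..<r}" for z
  proof -
    have "((\<lambda>x. exp (eval_fps C x)) has_field_derivative
            exp (eval_fps C z) * eval_fps (fps_deriv C) z) (at z)"
      using in_radius[OF radius(2) z] by (auto intro!: derivative_eq_intros has_field_derivative_eval_fps)
    then have "(eval_fps G has_field_derivative eval_fps G z * eval_fps (fps_deriv C) z) (at z)"
      using z exp_C by (auto intro: has_field_derivative_transform_within_open[of _ _ _ "{0<..<r}"])
    moreover have "(eval_fps G has_field_derivative eval_fps (fps_deriv G) z) (at z)"
      using in_radius[OF radius(1) z] by (rule has_field_derivative_eval_fps)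
    ultimately have "eval_fps (fps_deriv G) z = eval_fps G z * eval_fps (fps_deriv C) z"
      using DERIV_unique by blast
    then show ?thesis
      using in_radius[OF radius(1) z] in_radius[OF radius'(2) z] in_radius[OF radius'(1) z]
        in_radius[OF \<open>ereal r \<le> fps_conv_radius (G * fps_deriv C)\<close> z]
      by (simp add: eval_fps_diff eval_fps_mult)
  qed
  then have "eventually (\<lambda>z. eval_fps (fps_deriv G - G * fps_deriv C) z = 0) (at_right 0)"
    using eventually_at_right_real[OF r] by (auto elim: eventually_mono)
  moreover have "fps_conv_radius (fps_deriv G - G * fps_deriv C) > 0"
    using r radius_diff by (metis ereal_less(2) order_less_le_trans zero_ereal_def)
  ultimately have "fps_deriv G - G * fps_deriv C = 0"
    by (intro fps_eq_0_if_eval_fps_eventually_0)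
  then show ?thesis by simp
qed

section \<open>The Bessel generating function and the recurrence\<close>

definition bessel_fps :: "real fps" where
  "bessel_fps = Abs_fps (\<lambda>m. 1 / (fact m)^2)"

lemma fps_conv_radius_bessel_fps [simp]: "fps_conv_radius bessel_fps = \<infinity>"
proof -
  have "summable (\<lambda>n. fps_nth bessel_fps n * r ^ n)" if "r > 0" for r :: real
  proof (rule summable_comparison_test[OF _ summable_exp[of r]])
    have "(fact n :: real) \<le> (fact n)^2" for n
      by (simp add: power2_eq_square)
    then have "r ^ n / (fact n)^2 \<le> r ^ n / fact n" for n
      using that by (intro divide_left_mono) auto
    then have "norm (fps_nth bessel_fps n * r ^ n) \<le> inverse (fact n) * r ^ n" for n
      using that by (simp add: bessel_fps_def field_simps)
    then show "\<exists>N. \<forall>n\<ge>N. norm (fps_nth bessel_fps n * r ^ n) \<le> inverse (fact n) * r ^ n"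
      by blast
  qed
  then have "fps_conv_radius bessel_fps \<ge> \<infinity>"
    unfolding fps_conv_radius_def by (intro conv_radius_geI_ex') auto
  then show ?thesis by simp
qed

lemma eval_bessel_fps: "0 \<le> z \<Longrightarrow> eval_fps bessel_fps z = bessel_I0 (2 * sqrt z)"
  unfolding eval_fps_def bessel_I0_def bessel_fps_def
  by (simp add: power_mult)

lemma eval_bessel_fps_ge_1:
  assumes "0 \<le> z"
  shows "eval_fps bessel_fps z \<ge> 1"
proof -
  have "summable (\<lambda>n. fps_nth bessel_fps n * z ^ n)"
    by (rule summable_fps) simp
  then have "(\<Sum>n\<in>{0}. fps_nth bessel_fps n * z ^ n) \<le> (\<Sum>n. fps_nth bessel_fps n * z ^ n)"
    by (rule sum_le_suminf) (use assms in \<open>auto simp: bessel_fps_def\<close>)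
  then show ?thesis by (simp add: eval_fps_def bessel_fps_def)
qed

text \<open>The exponential generating function of \<open>a\<close>, with the constant term \<open>a 0\<close> (left
  undetermined by the series for \<open>ln I\<^sub>0(2\<surd>z)\<close>) replaced by 0.\<close>
definition egf :: "(nat \<Rightarrow> real) \<Rightarrow> real fps" where
  "egf a = Abs_fps (\<lambda>n. if n = 0 then 0 else a n / fact n)"

lemma fps_deriv_bessel_fps:
  fixes a :: "nat \<Rightarrow> real"
  assumes r: "r > 0"
    and a: "\<And>z. 0 \<le> z \<Longrightarrow> z < r \<Longrightarrow>
        (\<lambda>n. a (Suc n) * z ^ Suc n / fact (Suc n)) sums ln (bessel_I0 (2 * sqrt z))"
  shows "fps_deriv bessel_fps = bessel_fps * fps_deriv (egf a)"
proof (rule fps_deriv_eq_mult_deriv_if_exp_eval_fps_eq[OF r])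
  have sums: "(\<lambda>n. fps_nth (egf a) n * z ^ n) sums ln (eval_fps bessel_fps z)"
    if "0 \<le> z" "z < r" for z
  proof -
    have "(\<lambda>n. fps_nth (egf a) (Suc n) * z ^ Suc n) sums ln (eval_fps bessel_fps z)"
      using a[OF that] that by (simp add: egf_def eval_bessel_fps)
    then show ?thesis by (subst (asm) sums_Suc_iff) (simp add: egf_def)
  qed
  show "ereal r \<le> fps_conv_radius (egf a)"
    unfolding fps_conv_radius_def
    by (rule conv_radius_geI_ex') (use sums in \<open>auto simp: sums_iff\<close>)
  show "exp (eval_fps (egf a) z) = eval_fps bessel_fps z" if "0 < z" "z < r" for z
    using sums[of z] eval_bessel_fps_ge_1[of z] that by (simp add: eval_fps_def sums_iff)
qed simp

lemma moment_sum_recurrence: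
  fixes a d :: "nat \<Rightarrow> real"
  assumes bessel_deriv: "fps_deriv bessel_fps = bessel_fps * fps_deriv (egf a)" and "p \<ge> 1"
  shows "real p * moment_sum N d p =
           (\<Sum>q=1..p. moment_sum N d (p - q) * real q * (a q * (\<Sum>j<N. d j ^ (2 * q))) / fact q)"
proof -
  define F where "F = (\<Prod>i<N. bessel_fps oo (fps_const (d i ^ 2) * fps_X))"
  define D where "D = (\<Sum>i<N. egf a oo (fps_const (d i ^ 2) * fps_X))"
  have deriv: "fps_deriv F = F * fps_deriv D"
    unfolding F_def D_def
    by (intro fps_deriv_prod_eq_mult_deriv_sum fps_deriv_compose_eq_mult_deriv bessel_deriv) simp_all
  have F: "fps_nth F k = moment_sum N d k" for k
    unfolding F_def moment_sum_def
    by (subst fps_prod_nth') (auto intro!: sum.cong prod.cong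
        simp: bessel_fps_def power_divide mult.commute[of 2] simp flip: power_mult)
  have D: "fps_nth D q = (if q = 0 then 0 else a q / fact q * (\<Sum>j<N. d j ^ (2 * q)))" for q
    unfolding D_def fps_sum_nth fps_nth_compose_linear
    by (simp add: egf_def sum_distrib_left mult_ac flip: power_mult power_mult_distrib)
  have "real p * moment_sum N d p = fps_nth (fps_deriv F) (p - 1)"
    using \<open>p \<ge> 1\<close> by (simp add: F)
  also have "\<dots> = (\<Sum>i=0..p-1. moment_sum N d i * (real (p - i) * fps_nth D (p - i)))"
    unfolding deriv fps_mult_nth using \<open>p \<ge> 1\<close> by (intro sum.cong refl) (simp add: F Suc_diff_Suc)
  also have "\<dots> = (\<Sum>q=1..p. moment_sum N d (p - q) * real q * (a q * (\<Sum>j<N. d j ^ (2 * q))) / fact q)"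
    by (rule sum.reindex_bij_witness[of _ "\<lambda>q. p - q" "\<lambda>i. p - i"]) (use \<open>p \<ge> 1\<close> in \<open>auto simp: D\<close>)
  finally show ?thesis .
qed

lemma recurrence_rescaled_by_fact_square:
  fixes S c :: "nat \<Rightarrow> real"
  assumes rec: "real p * S p = (\<Sum>q=1..p. S (p - q) * real q * c q / fact q)"
    and "p \<ge> 1" and "S 0 = 1"
  shows "(fact p)^2 * S p =
           (\<Sum>q=1..p-1. real ((p - 1) choose (q - 1)) * fact p / fact (p - q) * c q
                          * ((fact (p - q))^2 * S (p - q)))
           + fact p * c p" (is "_ = ?rhs")
proof -
  have coeff: "(fact p)^2 / real p * (real q / fact q) =
      real ((p - 1) choose (q - 1)) * fact p / fact (p - q) * (fact (p - q))^2"
    if "1 \<le> q" "q < p" for q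
  proof -
    have "real ((p - 1) choose (q - 1)) = fact (p - 1) / (fact (q - 1) * fact (p - q))"
      using that by (subst binomial_fact) (auto simp: algebra_simps)
    moreover have "(fact p :: real) = real p * fact (p - 1)" "(fact q :: real) = real q * fact (q - 1)"
      using that by (simp_all add: fact_reduce)
    ultimately show ?thesis
      using that by (simp add: field_simps power2_eq_square)
  qed
  have "(fact p)^2 * S p = (fact p)^2 / real p * (real p * S p)"
    using \<open>p \<ge> 1\<close> by simp
  also have "\<dots> = (\<Sum>q=1..p. (fact p)^2 / real p * (real q / fact q) * c q * S (p - q))"
    unfolding rec sum_distrib_left by (intro sum.cong refl) (simp add: field_simps)
  also have "\<dots> = (\<Sum>q=1..p-1. (fact p)^2 / real p * (real q / fact q) * c q * S (p - q))
      + (fact p)^2 / real p * (real p / fact p) * c p * S 0"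
    using \<open>p \<ge> 1\<close> by (cases p) (simp_all add: sum.cl_ivl_Suc)
  also have "\<dots> = ?rhs"
  proof -
    have "(fact p)^2 / real p * (real q / fact q) * c q * S (p - q) =
        real ((p - 1) choose (q - 1)) * fact p / fact (p - q) * c q * ((fact (p - q))^2 * S (p - q))"
      if "q \<in> {1..p-1}" for q
    proof -
      have "1 \<le> q" "q < p" using that by auto
      then show ?thesis by (simp only: coeff) (simp add: mult_ac)
    qed
    moreover have "(fact p)^2 / real p * (real p / fact p) * c p * S 0 = fact p * c p"
      using \<open>S 0 = 1\<close> \<open>p \<ge> 1\<close> by (simp add: power2_eq_square)
    ultimately show ?thesis by simp
  qed
  finally show ?thesis .
qed

theorem theorem4:
  fixes N p :: nat and E d a :: "nat \<Rightarrow> real"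
  assumes p: "p \<ge> 1"
    and distinct: "inj_on E {..<N}"
    and ND: "nondeg N E p"
    and dpos: "\<And>j. j < N \<Longrightarrow> d j > 0"
    and a_def: "\<exists>r>0. \<forall>z. 0 \<le> z \<and> z < r \<longrightarrow>
        (\<lambda>n. a (Suc n) * z ^ Suc n / fact (Suc n)) sums ln (bessel_I0 (2 * sqrt z))"
  shows "(\<forall>k\<in>{1..p}.
           ((\<lambda>T. (1 / T) * integral {0..T} (\<lambda>t. cmod (chi N d E t) ^ (2 * k)))
              \<longlongrightarrow> (fact k)^2 * (\<Sum>ks\<in>{ks. (\<forall>i\<ge>N. ks i = 0) \<and> (\<Sum>i<N. ks i) = k}.
                                   \<Prod>i<N. (d i ^ ks i / fact (ks i))^2)) at_top)
         \<and> time_avg (\<lambda>t. cmod (chi N d E t) ^ (2 * p)) =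
           (\<Sum>q=1..p-1. real ((p - 1) choose (q - 1)) * fact p / fact (p - q) * a q
                          * (\<Sum>j<N. d j ^ (2 * q))
                          * time_avg (\<lambda>t. cmod (chi N d E t) ^ (2 * (p - q))))
           + fact p * a p * (\<Sum>j<N. d j ^ (2 * p))"
proof -
  obtain r where "r > 0" and bessel_log: "\<And>z. 0 \<le> z \<Longrightarrow> z < r \<Longrightarrow>
      (\<lambda>n. a (Suc n) * z ^ Suc n / fact (Suc n)) sums ln (bessel_I0 (2 * sqrt z))"
    using a_def by blast
  have average: "((\<lambda>T. 1 / T * integral {0..T} (\<lambda>t. cmod (chi N d E t) ^ (2 * k)))
      \<longlongrightarrow> (fact k)^2 * moment_sum N d k) at_top" if "k \<le> p" for k
    using time_average_cmod_chi_power_tendsto[OF ND that] .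
  then have time_avg: "time_avg (\<lambda>t. cmod (chi N d E t) ^ (2 * k)) = (fact k)^2 * moment_sum N d k"
    if "k \<le> p" for k
    unfolding time_avg_def using that by (intro tendsto_Lim) simp_all
  have "(fact p)^2 * moment_sum N d p =
      (\<Sum>q=1..p-1. real ((p - 1) choose (q - 1)) * fact p / fact (p - q) * (a q * (\<Sum>j<N. d j ^ (2 * q)))
                    * ((fact (p - q))^2 * moment_sum N d (p - q)))
      + fact p * (a p * (\<Sum>j<N. d j ^ (2 * p)))"
    by (intro recurrence_rescaled_by_fact_square moment_sum_recurrence
        fps_deriv_bessel_fps[OF \<open>r > 0\<close> bessel_log] p) simp_all
  then show ?thesis
    using average by (simp add: time_avg moment_sum_eq_sum_count_vectors mult.assoc)
qed

end
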